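(* Run the algorithm Mark&Predict (described in the context) with cache size $k$, and consider one of its phases (the period from one unmarking of all pages to the next). Let $c$ be the number of new pages of this phase (distinct pages requested during the phase that were not in the cache at its start). Suppose that at the start of the phase the cache contains exactly $\eta_0$ pages whose most recent prediction is $0$ and which are incorrect (i.e., the page is not requested during this phase) and exactly $\eta_1$ pages whose most recent prediction is $1$ and which are incorrect (i.e., the page is requested during this phase). Then the expected number of page faults incurred by Mark&Predict during this phase is at most $c\,(H_{\eta_1+c}-H_c+1)+H_k\,\eta_0,$ where $H_m=\sum_{j=1}^m 1/j$ (and $H_0=0$).
   Context: Paging: there is a universe $U$ of pages and a cache holding at most $k$ pages, initially empty. Requests arrive online; if a requested page is not in the cache (a page fault), it must be loaded, evicting a cached page if the cache holds $k$ pages. Along with each request $r_i$ the algorithm receives a prediction bit $p_i\in\{0,1\}$. A page whose most recent prediction is $0$ (resp. $1$) is called a $0$-page (resp. $1$-page). Algorithm Mark&Predict: pages carry a mark. On request $r_i$: if $r_i$ is not in the cache and the cache is full, then (i) if all cached pages are marked, unmark all pages (start of a new phase); (ii) if there is an unmarked $1$-page in the cache, evict one chosen uniformly at random among unmarked $1$-pages, otherwise evict an unmarked $0$-page chosen uniformly at random; then load $r_i$. Finally (in all cases) mark $r_i$. The expectation is over the algorithm's random choices during the phase, given the cache content and predictions at the start of the phase. *)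

theory Defs
  imports "HOL-Probability.Probability"
begin

text \<open>State of Mark and Predict: (cache, marked pages, most recent prediction of each page).
  A prediction True means bit 1, False means bit 0.\<close>
type_synonym 'a mp_state = "'a set \<times> 'a set \<times> ('a \<Rightarrow> bool)"

definition mp_step :: "nat \<Rightarrow> 'a mp_state \<Rightarrow> 'a \<times> bool \<Rightarrow> ('a mp_state \<times> nat) pmf" where
  "mp_step k s rq =
     (case s of (cache, marked, pred) \<Rightarrow>
      (case rq of (r, b) \<Rightarrow>
        let pred' = pred(r := b) in
        if r \<in> cache then return_pmf ((cache, insert r marked, pred'), 0)
        else if card cache < k then return_pmf ((insert r cache, insert r marked, pred'), 1)
        else
          (let marked0 = (if cache \<subseteq> marked then {} else marked);
               U = cache - marked0;
               U1 = {q \<in> U. pred q};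
               V = (if U1 \<noteq> {} then U1 else U)
           in map_pmf (\<lambda>v. ((insert r (cache - {v}), insert r marked0, pred'), 1))
                (pmf_of_set V))))"

fun mp_faults :: "nat \<Rightarrow> 'a mp_state \<Rightarrow> ('a \<times> bool) list \<Rightarrow> nat pmf" where
  "mp_faults k s [] = return_pmf 0"
| "mp_faults k s (rq # rs) =
     bind_pmf (mp_step k s rq) (\<lambda>(s', f). map_pmf (\<lambda>n. f + n) (mp_faults k s' rs))"

end

theory Submission
  imports Defs
begin

(*
  Inside a phase an unmarked cached page keeps the prediction it had at the phase start, since
  a requested page becomes marked. Hence Mark&Predict evicts uniformly random unmarked 1-pages
  as long as there are any, and then uniformly random unmarked 0-pages. By symmetry the
  unmarked cached pages of each kind always form a uniformly random subset, of the right size,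
  of the corresponding pool: the initially cached pages of that kind not yet requested in the
  phase. A request to a pool page thus faults with probability (missing pool pages) / (pool
  size), and summing over the shrinking pool gives differences of harmonic numbers, as for the
  classical marking algorithm. For the 1-pool this yields c + c (H_(eta1 + B) - H_B), where B
  counts the never-requested 1-pages, and for the 0-pool eta0 (H_p0 - H_eta0), where p0 <= k is
  the number of initially cached 0-pages. Since at most k distinct pages are requested,
  c <= B + eta0, and elementary inequalities between harmonic numbers give the stated bound.
*)

definition subsets_of_size :: "'a set \<Rightarrow> nat \<Rightarrow> 'a set set" where
  "subsets_of_size P a = {X. X \<subseteq> P \<and> card X = a}"

definition average :: "'b set \<Rightarrow> ('b \<Rightarrow> real) \<Rightarrow> real" where
  "average S f = (\<Sum>x\<in>S. f x) / real (card S)"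

lemma finite_subsets_of_size: "finite P \<Longrightarrow> finite (subsets_of_size P a)"
  unfolding subsets_of_size_def by (rule finite_subset[of _ "Pow P"]) auto

lemma finite_mem_subsets_of_size: "finite P \<Longrightarrow> X \<in> subsets_of_size P a \<Longrightarrow> finite X"
  unfolding subsets_of_size_def using finite_subset by blast

lemma card_subsets_of_size: "finite P \<Longrightarrow> card (subsets_of_size P a) = card P choose a"
  unfolding subsets_of_size_def by (rule n_subsets)

lemma subsets_of_size_nonempty: "a \<le> card P \<Longrightarrow> subsets_of_size P a \<noteq> {}"
  unfolding subsets_of_size_def by (metis (mono_tags) empty_Collect_eq obtain_subset_with_card_n)

lemma subsets_of_size_eq_empty:
  assumes "finite P" "card P < a"
  shows "subsets_of_size P a = {}"
  using assms(2) unfolding subsets_of_size_def by (auto dest: card_mono[OF assms(1)])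

lemma subsets_of_size_0: "finite P \<Longrightarrow> subsets_of_size P 0 = {{}}"
  unfolding subsets_of_size_def using finite_subset by fastforce

lemma subsets_of_size_card: "finite P \<Longrightarrow> subsets_of_size P (card P) = {P}"
  unfolding subsets_of_size_def using card_subset_eq by blast

lemma average_singleton [simp]: "average {x} f = f x"
  by (simp add: average_def)

lemma average_cong: "(\<And>x. x \<in> S \<Longrightarrow> f x = g x) \<Longrightarrow> average S f = average S g"
  by (simp add: average_def)

lemma average_add_const:
  assumes "finite S" "S \<noteq> {}"
  shows "average S (\<lambda>x. c + f x) = c + average S f"
  using assms by (simp add: average_def sum.distrib add_divide_distrib)

lemma sum_subsets_of_size_remove:
  assumes "finite P" "0 < a"
  shows "(\<Sum>X\<in>subsets_of_size P a. \<Sum>v\<in>X. G (X - {v}))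
       = real (card P - (a - 1)) * (\<Sum>Y\<in>subsets_of_size P (a - 1). G Y)"
proof -
  have fin: "finite X" if "X \<in> subsets_of_size P b" for X b
    using finite_mem_subsets_of_size[OF assms(1) that] .
  have "(\<Sum>X\<in>subsets_of_size P a. \<Sum>v\<in>X. G (X - {v}))
      = (\<Sum>(X, v)\<in>Sigma (subsets_of_size P a) (\<lambda>X. X). G (X - {v}))"
    using fin assms(1) by (simp add: sum.Sigma finite_subsets_of_size)
  also have "\<dots> = (\<Sum>(Y, v)\<in>Sigma (subsets_of_size P (a - 1)) (\<lambda>Y. P - Y). G Y)"
  proof (rule sum.reindex_bij_witness[of _ "\<lambda>(Y, v). (insert v Y, v)" "\<lambda>(X, v). (X - {v}, v)"])
    fix z assume "z \<in> Sigma (subsets_of_size P (a - 1)) (\<lambda>Y. P - Y)"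
    then obtain Y v where z: "z = (Y, v)" "Y \<in> subsets_of_size P (a - 1)" "v \<in> P - Y"
      by blast
    then show "(\<lambda>(X, v). (X - {v}, v)) ((\<lambda>(Y, v). (insert v Y, v)) z) = z"
      by auto
    show "(\<lambda>(Y, v). (insert v Y, v)) z \<in> Sigma (subsets_of_size P a) (\<lambda>X. X)"
      using z fin[OF z(2)] assms(2) by (auto simp: subsets_of_size_def)
  next
    fix z assume "z \<in> Sigma (subsets_of_size P a) (\<lambda>X. X)"
    then obtain X v where z: "z = (X, v)" "X \<in> subsets_of_size P a" "v \<in> X"
      by auto
    then show "(\<lambda>(Y, v). (insert v Y, v)) ((\<lambda>(X, v). (X - {v}, v)) z) = z"
      by (auto simp: insert_absorb)
    show "(\<lambda>(X, v). (X - {v}, v)) z \<in> Sigma (subsets_of_size P (a - 1)) (\<lambda>Y. P - Y)"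
      using z fin[OF z(2)] by (auto simp: subsets_of_size_def)
  qed (auto simp: split_beta)
  also have "\<dots> = (\<Sum>Y\<in>subsets_of_size P (a - 1). \<Sum>v\<in>P - Y. G Y)"
    using assms(1) by (subst sum.Sigma) (auto simp: finite_subsets_of_size split_beta)
  also have "\<dots> = (\<Sum>Y\<in>subsets_of_size P (a - 1). real (card P - (a - 1)) * G Y)"
    using fin by (intro sum.cong) (auto simp: subsets_of_size_def card_Diff_subset)
  finally show ?thesis
    by (simp add: sum_distrib_left)
qed

lemma average_remove_element:
  assumes "finite P" "0 < a" "a \<le> card P"
  shows "average (subsets_of_size P a) (\<lambda>X. (\<Sum>v\<in>X. G (X - {v})) / real (card X))
       = average (subsets_of_size P (a - 1)) G"
proof -
  let ?p = "card P"
  have binom: "real a * real (?p choose a) = real (?p - (a - 1)) * real (?p choose (a - 1))"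
  proof -
    have "a * (?p choose a) = ?p * ((?p - 1) choose (a - 1))"
      using assms(2) by (rule times_binomial_minus1_eq)
    also have "\<dots> = (?p - (a - 1)) * (?p choose (a - 1))"
      by (simp add: binomial_absorb_comp)
    finally show ?thesis
      by (metis of_nat_mult)
  qed
  have "(\<Sum>X\<in>subsets_of_size P a. (\<Sum>v\<in>X. G (X - {v})) / real (card X))
      = (\<Sum>X\<in>subsets_of_size P a. \<Sum>v\<in>X. G (X - {v})) / real a"
    unfolding sum_divide_distrib by (rule sum.cong) (auto simp: subsets_of_size_def)
  then have "average (subsets_of_size P a) (\<lambda>X. (\<Sum>v\<in>X. G (X - {v})) / real (card X))
      = (\<Sum>X\<in>subsets_of_size P a. \<Sum>v\<in>X. G (X - {v})) / (real a * real (?p choose a))"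
    using assms(1) by (simp add: average_def card_subsets_of_size)
  also have "\<dots> = average (subsets_of_size P (a - 1)) G"
    using assms by (simp add: sum_subsets_of_size_remove binom average_def card_subsets_of_size)
  finally show ?thesis .
qed

lemma subsets_of_size_split:
  assumes "finite P" "r \<in> P" "0 < a"
  shows "subsets_of_size P a
       = insert r ` subsets_of_size (P - {r}) (a - 1) \<union> subsets_of_size (P - {r}) a"
proof (intro set_eqI iffI)
  fix X assume X: "X \<in> subsets_of_size P a"
  have "finite X"
    using finite_mem_subsets_of_size[OF assms(1) X] .
  then show "X \<in> insert r ` subsets_of_size (P - {r}) (a - 1) \<union> subsets_of_size (P - {r}) a"
    using X by (cases "r \<in> X") (auto simp: subsets_of_size_def intro!: rev_image_eqI[of "X - {r}"])
next
  fix X assume "X \<in> insert r ` subsets_of_size (P - {r}) (a - 1) \<union> subsets_of_size (P - {r}) a"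
  then show "X \<in> subsets_of_size P a"
    using assms finite_subset[of _ "P - {r}"]
    by (auto simp: subsets_of_size_def card_insert_if)
qed

lemma average_split:
  assumes "finite P" "r \<in> P" "0 < a" "a \<le> card P"
  shows "average (subsets_of_size P a) h
       = real a / real (card P) * average (subsets_of_size (P - {r}) (a - 1)) (\<lambda>Y. h (insert r Y))
       + real (card P - a) / real (card P) * average (subsets_of_size (P - {r}) a) h"
proof -
  let ?p = "card P" and ?S1 = "subsets_of_size (P - {r}) (a - 1)" and ?S2 = "subsets_of_size (P - {r}) a"
  define \<Sigma>1 where "\<Sigma>1 = (\<Sum>Y\<in>?S1. h (insert r Y))"
  define \<Sigma>2 where "\<Sigma>2 = (\<Sum>X\<in>?S2. h X)"
  have fin: "finite (P - {r})"
    using assms(1) by simp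
  have "inj_on (insert r) ?S1"
    by (rule inj_onI) (auto simp: subsets_of_size_def insert_ident)
  moreover have "insert r ` ?S1 \<inter> ?S2 = {}"
    by (auto simp: subsets_of_size_def)
  ultimately have sum: "(\<Sum>X\<in>subsets_of_size P a. h X) = \<Sigma>1 + \<Sigma>2"
    unfolding \<Sigma>1_def \<Sigma>2_def subsets_of_size_split[OF assms(1-3)]
    by (simp add: sum.union_disjoint sum.reindex finite_subsets_of_size assms(1))
  have p: "?p > 0" "card (P - {r}) = ?p - 1"
    using assms(1,2) card_gt_0_iff by auto
  have C: "real (?p choose a) > 0" "real ((?p - 1) choose (a - 1)) > 0"
    using assms(4) by auto
  have C1: "real a * real (?p choose a) = real ?p * real ((?p - 1) choose (a - 1))"
    using times_binomial_minus1_eq[OF assms(3)] by (metis of_nat_mult)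
  have C2: "real (?p - a) * real (?p choose a) = real ?p * real ((?p - 1) choose a)"
    using binomial_absorb_comp[of ?p a] by (metis of_nat_mult)
  have "real (?p - a) / real ?p * (\<Sigma>2 / real ((?p - 1) choose a)) = \<Sigma>2 / real (?p choose a)"
  proof (cases "a < ?p")
    case True
    then have "real ((?p - 1) choose a) > 0"
      by simp
    then show ?thesis
      using C C2 p by (simp add: field_simps)
  next
    case False
    then have "?S2 = {}"
      using fin p assms(4) by (intro subsets_of_size_eq_empty) auto
    then show ?thesis
      by (simp add: \<Sigma>2_def)
  qed
  moreover have "real a / real ?p * (\<Sigma>1 / real ((?p - 1) choose (a - 1))) = \<Sigma>1 / real (?p choose a)"
    using C C1 p by (simp add: field_simps)
  ultimately show ?thesis
    using fin p by (simp add: average_def card_subsets_of_size sum \<Sigma>1_def \<Sigma>2_def add_divide_distrib)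
qed

lemma average_evict:
  assumes "finite P" "0 < a" "a \<le> card P"
    and "\<And>X. X \<in> subsets_of_size P a \<Longrightarrow> h X = 1 + (\<Sum>v\<in>X. G (X - {v})) / real (card X)"
  shows "average (subsets_of_size P a) h = 1 + average (subsets_of_size P (a - 1)) G"
proof -
  have "average (subsets_of_size P a) h
      = average (subsets_of_size P a) (\<lambda>X. 1 + (\<Sum>v\<in>X. G (X - {v})) / real (card X))"
    using assms(4) by (rule average_cong)
  also have "\<dots> = 1 + average (subsets_of_size P a) (\<lambda>X. (\<Sum>v\<in>X. G (X - {v})) / real (card X))"
    using assms(1,3) by (intro average_add_const finite_subsets_of_size subsets_of_size_nonempty)
  also have "\<dots> = 1 + average (subsets_of_size P (a - 1)) G"
    by (simp add: average_remove_element assms(1-3))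
  finally show ?thesis .
qed

lemma average_evict_unless_member:
  assumes "finite P" "r \<in> P" "0 < a" "a \<le> card P"
    and "\<And>Y. Y \<in> subsets_of_size (P - {r}) (a - 1) \<Longrightarrow> h (insert r Y) = G Y"
    and "\<And>X. X \<in> subsets_of_size (P - {r}) a \<Longrightarrow> h X = 1 + (\<Sum>v\<in>X. G (X - {v})) / real (card X)"
  shows "average (subsets_of_size P a) h
       = real (card P - a) / real (card P) + average (subsets_of_size (P - {r}) (a - 1)) G"
proof -
  let ?p = "card P" and ?A = "average (subsets_of_size (P - {r}) (a - 1)) G"
  have p: "?p > 0" "card (P - {r}) = ?p - 1"
    using assms(1,2) card_gt_0_iff by auto
  have "real (?p - a) / real ?p * average (subsets_of_size (P - {r}) a) h
      = real (?p - a) / real ?p * (1 + ?A)"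
  proof (cases "a < ?p")
    case True
    have "average (subsets_of_size (P - {r}) a) h = 1 + ?A"
      using assms(1,3,6) p True by (intro average_evict) auto
    then show ?thesis
      by simp
  qed (use assms(4) in simp)
  moreover have "average (subsets_of_size (P - {r}) (a - 1)) (\<lambda>Y. h (insert r Y)) = ?A"
    using assms(5) by (rule average_cong)
  ultimately have "average (subsets_of_size P a) h
      = real a / real ?p * ?A + real (?p - a) / real ?p * (1 + ?A)"
    using average_split[OF assms(1-4), of h] by simp
  also have "\<dots> = real (?p - a) / real ?p + (real a + real (?p - a)) / real ?p * ?A"
    by (simp add: algebra_simps add_divide_distrib)
  also have "real a + real (?p - a) = real ?p"
    using assms(4) by simp
  finally show ?thesis
    using p by simp
qed

lemma harm_0 [simp]: "harm 0 = 0"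
  by (simp add: harm_def)

lemma harm_Suc_real: "(harm (Suc n) :: real) = harm n + 1 / real (Suc n)"
  by (simp add: harm_Suc divide_inverse)

lemma harm_diff_ge:
  assumes "g \<le> p"
  shows "real (p - g) \<le> real p * ((harm p :: real) - harm g)"
  using assms
proof (induction p rule: dec_induct)
  case (step n)
  have "(harm g :: real) \<le> harm n"
    using step.hyps(1) by (rule harm_mono)
  then have "real (Suc n - g) \<le> real (Suc n) * (harm n - harm g) + 1"
    using step by (simp add: of_nat_diff algebra_simps)
  then show ?case
    by (simp add: harm_Suc_real algebra_simps)
qed simp

lemma harm_diff_antimono:
  assumes "B \<le> B'"
  shows "(harm (e + B') :: real) - harm B' \<le> harm (e + B) - harm B"
  using assms
proof (induction B' rule: dec_induct)
  case (step n)
  have "1 / real (Suc (e + n)) \<le> 1 / real (Suc n)"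
    by (rule divide_left_mono) auto
  then show ?case
    using step.IH by (simp add: harm_Suc_real)
qed simp

lemma harm_diff_times_le: "real (B + x) * ((harm (B + x) :: real) - harm B) \<le> real x * harm x"
proof (induction x)
  case (Suc x)
  have "(harm (x + B) :: real) - harm B \<le> harm x"
    using harm_diff_antimono[of 0 B x] by simp
  then show ?case
    using Suc.IH by (simp add: harm_Suc_real algebra_simps)
qed simp

lemma harm_phase_bound_le:
  fixes c \<eta>1 B \<eta>0 p0 k :: nat
  assumes "c \<le> B + \<eta>0" "p0 \<le> k" "\<eta>0 \<le> p0"
  shows "real c + real c * ((harm (\<eta>1 + B) :: real) - harm B) + real \<eta>0 * (harm p0 - harm \<eta>0)
     \<le> real c * (harm (\<eta>1 + c) - harm c + 1) + harm k * real \<eta>0"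
proof -
  have "real c * ((harm (\<eta>1 + B) :: real) - harm B) \<le> real c * (harm (\<eta>1 + c) - harm c) + real \<eta>0 * harm \<eta>0"
  proof (cases "c \<le> B")
    case True
    then have "real c * ((harm (\<eta>1 + B) :: real) - harm B) \<le> real c * (harm (\<eta>1 + c) - harm c)"
      by (simp add: mult_left_mono harm_diff_antimono)
    then show ?thesis
      using harm_nonneg[where 'a = real, of \<eta>0] by (simp add: add_increasing2)
  next
    case False
    define x where "x = c - B"
    have c: "c = B + x"
      using False by (simp add: x_def)
    have "real c * ((harm (\<eta>1 + B) :: real) - harm B)
        \<le> real c * ((harm (\<eta>1 + c) - harm c) + (harm c - harm B))"
      using False by (intro mult_left_mono) (auto simp: harm_mono)
    also have "\<dots> = real c * (harm (\<eta>1 + c) - harm c) + real (B + x) * (harm (B + x) - harm B)"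
      by (simp add: c algebra_simps)
    also have "\<dots> \<le> real c * (harm (\<eta>1 + c) - harm c) + real x * harm x"
      using harm_diff_times_le[of B x] by simp
    also have "\<dots> \<le> real c * (harm (\<eta>1 + c) - harm c) + real \<eta>0 * harm \<eta>0"
      using assms(1) by (simp add: x_def mult_mono harm_mono harm_nonneg)
    finally show ?thesis .
  qed
  moreover have "real \<eta>0 * (harm \<eta>0 :: real) + real \<eta>0 * (harm p0 - harm \<eta>0) \<le> harm k * real \<eta>0"
    using assms(2) by (simp add: algebra_simps mult_right_mono harm_mono)
  ultimately show ?thesis
    by (simp add: algebra_simps)
qed

lemma card_diff_le_card_diff:
  assumes "finite A" "finite B" "card A \<le> card B"
  shows "card (A - B) \<le> card (B - A)"
proof -
  have "card A = card (A \<inter> B) + card (A - B)" "card B = card (B \<inter> A) + card (B - A)"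
    using assms(1,2) by (simp_all add: card_Int_Diff)
  then show ?thesis
    using assms(3) by (simp add: Int_commute)
qed

lemma card_unrequested_ge:
  assumes "finite M" "finite P" "finite R" "M \<inter> P = {}" "card (M \<union> R) \<le> card M + b"
  shows "card P - b \<le> card (P - R)"
proof -
  have "card M + card (P \<inter> R) = card (M \<union> (P \<inter> R))"
    using assms(1,2,4) by (simp add: card_Un_disjoint disjoint_iff)
  also have "\<dots> \<le> card (M \<union> R)"
    using assms(1,3) by (intro card_mono) auto
  finally have "card (P \<inter> R) \<le> b"
    using assms(5) by simp
  moreover have "card P = card (P \<inter> R) + card (P - R)"
    using assms(2) by (rule card_Int_Diff)
  ultimately show ?thesis
    by simp
qed

definition expected_faults :: "nat \<Rightarrow> 'a mp_state \<Rightarrow> ('a \<times> bool) list \<Rightarrow> real" where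
  "expected_faults k s rs = measure_pmf.expectation (mp_faults k s rs) real"

definition eviction_candidates :: "'a set \<Rightarrow> ('a \<Rightarrow> bool) \<Rightarrow> 'a set" where
  "eviction_candidates U pred = (if {q \<in> U. pred q} \<noteq> {} then {q \<in> U. pred q} else U)"

lemma set_pmf_mp_step: "set_pmf (mp_step k s rq) \<subseteq> UNIV \<times> {..1}"
  unfolding mp_step_def by (auto split: prod.splits simp: Let_def)

lemma set_pmf_mp_faults: "set_pmf (mp_faults k s rs) \<subseteq> {..length rs}"
proof (induction rs arbitrary: s)
  case (Cons rq rs)
  have "set_pmf (mp_faults k s (rq # rs))
      = (\<Union>x\<in>set_pmf (mp_step k s rq). (+) (snd x) ` set_pmf (mp_faults k (fst x) rs))"
    by (simp add: split_beta)
  also have "\<dots> \<subseteq> {..length (rq # rs)}"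
  proof (intro UN_least image_subsetI)
    fix x n assume "x \<in> set_pmf (mp_step k s rq)" "n \<in> set_pmf (mp_faults k (fst x) rs)"
    then have "snd x \<le> 1" "n \<le> length rs"
      using set_pmf_mp_step[of k s rq] Cons.IH[of "fst x"] by (auto simp: mem_Times_iff)
    then show "snd x + n \<in> {..length (rq # rs)}"
      by simp
  qed
  finally show ?case .
qed simp

lemma finite_set_pmf_mp_faults: "finite (set_pmf (mp_faults k s rs))"
  by (rule finite_subset[OF set_pmf_mp_faults]) simp

lemma expected_faults_Nil [simp]: "expected_faults k s [] = 0"
  by (simp add: expected_faults_def)

lemma expected_faults_return:
  assumes "mp_step k s rq = return_pmf (s', f)"
  shows "expected_faults k s (rq # rs) = real f + expected_faults k s' rs"
  using assms
  by (simp add: expected_faults_def bind_return_pmf integrable_measure_pmf_finite finite_set_pmf_mp_faults)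

lemma expected_faults_uniform:
  assumes "mp_step k s rq = map_pmf (\<lambda>v. (s' v, 1)) (pmf_of_set V)" "finite V" "V \<noteq> {}"
  shows "expected_faults k s (rq # rs) = 1 + (\<Sum>v\<in>V. expected_faults k (s' v) rs) / real (card V)"
proof -
  have "expected_faults k s (rq # rs)
      = measure_pmf.expectation (pmf_of_set V \<bind> (\<lambda>v. map_pmf (\<lambda>n. 1 + n) (mp_faults k (s' v) rs))) real"
    by (simp add: expected_faults_def assms(1) map_pmf_def bind_assoc_pmf bind_return_pmf)
  also have "\<dots> = (\<Sum>v\<in>V. (1 + expected_faults k (s' v) rs) / real (card V))"
    using assms
    by (simp add: pmf_expectation_bind_pmf_of_set expected_faults_def divide_inverse
        integrable_measure_pmf_finite finite_set_pmf_mp_faults mult.commute)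
  also have "\<dots> = 1 + (\<Sum>v\<in>V. expected_faults k (s' v) rs) / real (card V)"
    using assms by (simp add: add_divide_distrib sum.distrib flip: sum_divide_distrib)
  finally show ?thesis .
qed

lemma expected_faults_hit:
  assumes "r \<in> cache"
  shows "expected_faults k (cache, marked, pred) ((r, b) # rs)
       = expected_faults k (cache, insert r marked, pred(r := b)) rs"
  using assms by (simp add: expected_faults_return mp_step_def)

lemma mp_step_miss:
  assumes "r \<notin> cache" "card cache = k" "\<not> cache \<subseteq> marked"
  shows "mp_step k (cache, marked, pred) (r, b) = map_pmf
     (\<lambda>v. ((insert r (cache - {v}), insert r marked, pred(r := b)), 1))
     (pmf_of_set (eviction_candidates (cache - marked) pred))"
  using assms unfolding mp_step_def eviction_candidates_def Let_def by (simp, blast)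

lemma expected_faults_miss:
  assumes "r \<notin> cache" "card cache = k" "\<not> cache \<subseteq> marked"
    and "eviction_candidates (cache - marked) pred = V" "finite V" "V \<noteq> {}"
  shows "expected_faults k (cache, marked, pred) ((r, b) # rs)
     = 1 + (\<Sum>v\<in>V. expected_faults k (insert r (cache - {v}), insert r marked, pred(r := b)) rs)
           / real (card V)"
  using assms by (intro expected_faults_uniform) (simp_all add: mp_step_miss)

lemma expected_faults_phase_start:
  assumes "fst (hd rs) \<notin> C" "card C = k" "C \<noteq> {}"
  shows "expected_faults k (C, C, pred) rs = expected_faults k (C, {}, pred) rs"
proof (cases rs)
  case (Cons rq rs')
  then have "mp_step k (C, C, pred) rq = mp_step k (C, {}, pred) rq"
    using assms by (simp add: mp_step_def split_beta, blast)
  then show ?thesis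
    by (simp add: Cons expected_faults_def)
qed simp

lemma eviction_candidates_1pages:
  "X \<noteq> {} \<Longrightarrow> \<forall>q\<in>X. pred q \<Longrightarrow> \<forall>q\<in>Q. \<not> pred q \<Longrightarrow> eviction_candidates (Q \<union> X) pred = X"
  unfolding eviction_candidates_def by auto

definition random_cache_faults ::
  "nat \<Rightarrow> 'a set \<Rightarrow> 'a set \<Rightarrow> 'a set \<Rightarrow> nat \<Rightarrow> ('a \<Rightarrow> bool) \<Rightarrow> ('a \<times> bool) list \<Rightarrow> real" where
  "random_cache_faults k M Q P a pred rs =
     average (subsets_of_size P a) (\<lambda>X. expected_faults k (M \<union> Q \<union> X, M, pred) rs)"

lemma random_cache_faults_Nil [simp]: "random_cache_faults k M Q P a pred [] = 0"
  by (simp add: random_cache_faults_def average_def)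

lemma random_cache_faults_exhausted:
  assumes "finite P" "finite Q"
  shows "random_cache_faults k M Q P 0 pred rs = random_cache_faults k M {} Q (card Q) pred rs"
  using assms by (simp add: random_cache_faults_def subsets_of_size_0 subsets_of_size_card)

lemma random_cache_faults_hit:
  assumes "r \<in> M \<union> Q"
  shows "random_cache_faults k M Q P a pred ((r, b) # rs)
       = random_cache_faults k (insert r M) (Q - {r}) P a (pred(r := b)) rs"
  unfolding random_cache_faults_def
proof (rule average_cong)
  fix X
  have "M \<union> Q \<union> X = insert r M \<union> (Q - {r}) \<union> X"
    using assms by blast
  then show "expected_faults k (M \<union> Q \<union> X, M, pred) ((r, b) # rs)
      = expected_faults k (insert r M \<union> (Q - {r}) \<union> X, insert r M, pred(r := b)) rs"
    using assms by (simp add: expected_faults_hit)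
qed

definition random_cache_wf :: "nat \<Rightarrow> 'a set \<Rightarrow> 'a set \<Rightarrow> 'a set \<Rightarrow> nat \<Rightarrow> bool" where
  "random_cache_wf k M Q P a \<longleftrightarrow>
     finite M \<and> finite Q \<and> finite P \<and> M \<inter> Q = {} \<and> M \<inter> P = {} \<and> Q \<inter> P = {}
     \<and> a \<le> card P \<and> card M + card Q + a = k"

lemma random_cache_wf_hit:
  assumes "random_cache_wf k M Q P a" "r \<in> M \<union> Q"
  shows "random_cache_wf k (insert r M) (Q - {r}) P a"
proof -
  have "card (insert r M) + card (Q - {r}) = card M + card Q"
  proof (cases "r \<in> M")
    case False
    then have "r \<in> Q"
      using assms(2) by blast
    then have "card Q = Suc (card (Q - {r}))"
      using assms(1) unfolding random_cache_wf_def by (intro card.remove) auto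
    then show ?thesis
      using False assms(1) unfolding random_cache_wf_def by simp
  next
    case True
    then have "r \<notin> Q"
      using assms(1) unfolding random_cache_wf_def by blast
    then show ?thesis
      using True by (simp add: insert_absorb)
  qed
  then show ?thesis
    using assms unfolding random_cache_wf_def by auto
qed

lemma random_cache_wf_pool:
  assumes "random_cache_wf k M Q P a" "r \<in> P" "0 < a"
  shows "random_cache_wf k (insert r M) Q (P - {r}) (a - 1)"
  using assms unfolding random_cache_wf_def by (auto simp: card_insert_if disjoint_iff)

lemma random_cache_wf_new:
  assumes "random_cache_wf k M Q P a" "r \<notin> M \<union> Q \<union> P" "0 < a"
  shows "random_cache_wf k (insert r M) Q P (a - 1)"
  using assms unfolding random_cache_wf_def by auto

lemma random_cache_wf_exhausted:
  "random_cache_wf k M Q P 0 \<Longrightarrow> random_cache_wf k M {} Q (card Q)"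
  unfolding random_cache_wf_def by auto

lemma random_cache_wf_free_slot:
  assumes "random_cache_wf k M {} P a" "r \<notin> M" "card (M \<union> insert r R) \<le> k" "finite R"
  shows "0 < a"
proof -
  have "card M < card (M \<union> insert r R)"
    using assms(1,2,4) unfolding random_cache_wf_def by (intro psubset_card_mono) auto
  then show ?thesis
    using assms(1,3) unfolding random_cache_wf_def by simp
qed

lemma expected_faults_evict_pool:
  assumes "random_cache_wf k M Q P a" "X \<in> subsets_of_size P a" "0 < a" "r \<notin> M \<union> Q \<union> X"
    and "eviction_candidates (Q \<union> X) pred = X"
  shows "expected_faults k (M \<union> Q \<union> X, M, pred) ((r, b) # rs)
       = 1 + (\<Sum>v\<in>X. expected_faults k (insert r M \<union> Q \<union> (X - {v}), insert r M, pred(r := b)) rs)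
             / real (card X)"
proof -
  from assms(1,2) have fin: "finite M" "finite Q" "finite X"
    and disj: "M \<inter> Q = {}" "M \<inter> X = {}" "Q \<inter> X = {}"
    and card: "card M + card Q + card X = k"
    unfolding random_cache_wf_def subsets_of_size_def by (auto intro: finite_subset)
  have "X \<noteq> {}"
    using assms(2,3) by (auto simp: subsets_of_size_def)
  have "card (M \<union> Q \<union> X) = card (M \<union> Q) + card X"
    using fin disj by (intro card_Un_disjoint) auto
  also have "card (M \<union> Q) = card M + card Q"
    using fin(1,2) disj(1) by (rule card_Un_disjoint)
  finally have "card (M \<union> Q \<union> X) = k"
    using card by simp
  moreover have "M \<union> Q \<union> X - M = Q \<union> X" "\<not> M \<union> Q \<union> X \<subseteq> M"
    using disj \<open>X \<noteq> {}\<close> by blast+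
  ultimately have "expected_faults k (M \<union> Q \<union> X, M, pred) ((r, b) # rs)
      = 1 + (\<Sum>v\<in>X. expected_faults k (insert r (M \<union> Q \<union> X - {v}), insert r M, pred(r := b)) rs)
            / real (card X)"
    using assms(4,5) fin(3) \<open>X \<noteq> {}\<close> by (intro expected_faults_miss) simp_all
  also have "(\<Sum>v\<in>X. expected_faults k (insert r (M \<union> Q \<union> X - {v}), insert r M, pred(r := b)) rs)
      = (\<Sum>v\<in>X. expected_faults k (insert r M \<union> Q \<union> (X - {v}), insert r M, pred(r := b)) rs)"
  proof (rule sum.cong)
    fix v assume "v \<in> X"
    then have "insert r (M \<union> Q \<union> X - {v}) = insert r M \<union> Q \<union> (X - {v})"
      using disj by blast
    then show "expected_faults k (insert r (M \<union> Q \<union> X - {v}), insert r M, pred(r := b)) rs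
        = expected_faults k (insert r M \<union> Q \<union> (X - {v}), insert r M, pred(r := b)) rs"
      by simp
  qed simp
  finally show ?thesis .
qed

lemma random_cache_faults_new:
  assumes "random_cache_wf k M Q P a" "r \<notin> M \<union> Q \<union> P" "0 < a"
    and "\<And>X. X \<in> subsets_of_size P a \<Longrightarrow> eviction_candidates (Q \<union> X) pred = X"
  shows "random_cache_faults k M Q P a pred ((r, b) # rs)
       = 1 + random_cache_faults k (insert r M) Q P (a - 1) (pred(r := b)) rs"
  unfolding random_cache_faults_def
proof (rule average_evict)
  show "finite P" "a \<le> card P"
    using assms(1) by (simp_all add: random_cache_wf_def)
  fix X assume X: "X \<in> subsets_of_size P a"
  have "r \<notin> M \<union> Q \<union> X"
    using X assms(2) by (auto simp: subsets_of_size_def)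
  then show "expected_faults k (M \<union> Q \<union> X, M, pred) ((r, b) # rs)
      = 1 + (\<Sum>v\<in>X. expected_faults k (insert r M \<union> Q \<union> (X - {v}), insert r M, pred(r := b)) rs)
            / real (card X)"
    by (rule expected_faults_evict_pool[OF assms(1) X assms(3) _ assms(4)[OF X]])
qed (rule assms(3))

lemma random_cache_faults_pool:
  assumes "random_cache_wf k M Q P a" "r \<in> P" "0 < a"
    and "\<And>X. X \<in> subsets_of_size P a \<Longrightarrow> eviction_candidates (Q \<union> X) pred = X"
  shows "random_cache_faults k M Q P a pred ((r, b) # rs)
       = real (card P - a) / real (card P)
         + random_cache_faults k (insert r M) Q (P - {r}) (a - 1) (pred(r := b)) rs"
  unfolding random_cache_faults_def
proof (rule average_evict_unless_member)
  show "finite P" "a \<le> card P"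
    using assms(1) by (simp_all add: random_cache_wf_def)
  fix Y
  have "M \<union> Q \<union> insert r Y = insert r M \<union> Q \<union> Y"
    by blast
  then show "expected_faults k (M \<union> Q \<union> insert r Y, M, pred) ((r, b) # rs)
      = expected_faults k (insert r M \<union> Q \<union> Y, insert r M, pred(r := b)) rs"
    by (simp add: expected_faults_hit)
next
  fix X assume "X \<in> subsets_of_size (P - {r}) a"
  then have X: "X \<in> subsets_of_size P a" and "r \<notin> X"
    by (auto simp: subsets_of_size_def)
  moreover have "r \<notin> M \<union> Q"
    using assms(1,2) by (auto simp: random_cache_wf_def)
  ultimately show "expected_faults k (M \<union> Q \<union> X, M, pred) ((r, b) # rs)
      = 1 + (\<Sum>v\<in>X. expected_faults k (insert r M \<union> Q \<union> (X - {v}), insert r M, pred(r := b)) rs)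
            / real (card X)"
    using assms(1,3) assms(4)[OF X] by (intro expected_faults_evict_pool) auto
qed (rule assms(2), rule assms(3))

(* A pool of p pages of which m are missing costs m (H_p - H_g) while shrinking to its g
   never-requested pages. For 0-pages m <= g; for 1-pages m is at most the number of pool pages
   already missing plus the number of new pages still to come. *)
definition pool_cost :: "'a set \<Rightarrow> 'a set \<Rightarrow> real" where
  "pool_cost P R = real (card (P - R)) * (harm (card P) - harm (card (P - R)))"

definition bound_0pages :: "'a set \<Rightarrow> 'a set \<Rightarrow> 'a set \<Rightarrow> real" where
  "bound_0pages M P R = real (card (R - M - P)) + pool_cost P R"

definition bound_1pages :: "'a set \<Rightarrow> 'a set \<Rightarrow> 'a set \<Rightarrow> nat \<Rightarrow> 'a set \<Rightarrow> real" where
  "bound_1pages M P1 P0 a R =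
     real (card (R - M - P1 - P0))
     + real (card (R - M - P1 - P0) + (card P1 - a)) * (harm (card P1) - harm (card (P1 - R)))
     + pool_cost P0 R"

lemma pool_cost_empty [simp]: "pool_cost P {} = 0"
  by (simp add: pool_cost_def)

lemma bound_0pages_empty [simp]: "bound_0pages M P {} = 0"
  by (simp add: bound_0pages_def)

lemma bound_1pages_empty [simp]: "bound_1pages M P1 P0 a {} = 0"
  by (simp add: bound_1pages_def)

lemma bound_0pages_hit:
  assumes "r \<in> M" "M \<inter> P = {}"
  shows "bound_0pages M P (insert r R) = bound_0pages M P R"
proof -
  have "insert r R - M - P = R - M - P" "P - insert r R = P - R"
    using assms by blast+
  then show ?thesis
    by (simp add: bound_0pages_def pool_cost_def)
qed

lemma bound_0pages_new:
  assumes "r \<notin> M \<union> P" "finite R"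
  shows "bound_0pages M P (insert r R) = 1 + bound_0pages (insert r M) P R"
proof -
  have "insert r R - M - P = insert r (R - insert r M - P)" "P - insert r R = P - R"
    using assms(1) by blast+
  then show ?thesis
    using assms(2) by (simp add: bound_0pages_def pool_cost_def)
qed

lemma bound_0pages_pool:
  assumes "random_cache_wf k M {} P a" "card (M \<union> insert r R) \<le> k" "finite R" "r \<in> P"
  shows "real (card P - a) / real (card P) + bound_0pages (insert r M) (P - {r}) R
       \<le> bound_0pages M P (insert r R)"
proof -
  let ?p = "card P" and ?g = "card (P - insert r R)"
  have "finite P"
    using assms(1) by (simp add: random_cache_wf_def)
  have "?p - a \<le> ?g"
    using assms(1-3) unfolding random_cache_wf_def by (intro card_unrequested_ge[of M]) auto
  have sets: "R - insert r M - (P - {r}) = insert r R - M - P" "P - {r} - R = P - insert r R"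
    using assms(4) by blast+
  have p: "?p = Suc (card (P - {r}))"
    using \<open>finite P\<close> assms(4) by (rule card.remove)
  have "real (?p - a) / real ?p \<le> real ?g / real ?p"
    using \<open>?p - a \<le> ?g\<close> by (simp add: divide_right_mono)
  also have "\<dots> = real ?g * (harm ?p - harm (?p - 1))"
    using p by (simp add: harm_Suc_real)
  finally show ?thesis
    using p by (simp add: bound_0pages_def pool_cost_def sets algebra_simps)
qed

lemma bound_1pages_exhausted:
  assumes "finite P1" "finite R" "M \<inter> P1 = {}" "P1 \<inter> P0 = {}"
  shows "bound_0pages M P0 R \<le> bound_1pages M P1 P0 0 R"
proof -
  let ?n = "card (R - M - P1 - P0)" and ?p = "card P1" and ?g = "card (P1 - R)"
  have "R - M - P0 = (R - M - P1 - P0) \<union> (P1 \<inter> R)"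
    using assms(3,4) by blast
  then have "card (R - M - P0) = ?n + card (P1 \<inter> R)"
    using assms(2) by (simp add: card_Un_disjoint disjoint_iff)
  moreover have "card (P1 \<inter> R) = ?p - ?g"
    using card_Int_Diff[OF assms(1), of R] by simp
  moreover have "real (?p - ?g) \<le> real (?n + ?p) * (harm ?p - harm ?g)"
  proof -
    have "?g \<le> ?p"
      using assms(1) by (intro card_mono) auto
    then have "real (?p - ?g) \<le> real ?p * (harm ?p - harm ?g)" "(harm ?g :: real) \<le> harm ?p"
      by (rule harm_diff_ge, rule harm_mono)
    moreover have "real ?p * (harm ?p - harm ?g) \<le> real (?n + ?p) * (harm ?p - harm ?g)"
      using calculation(2) by (intro mult_right_mono) simp_all
    ultimately show ?thesis
      by linarith
  qed
  ultimately show ?thesis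
    by (simp add: bound_0pages_def bound_1pages_def)
qed

lemma bound_1pages_hit:
  assumes "r \<in> M \<union> P0" "M \<inter> P1 = {}" "P1 \<inter> P0 = {}" "finite P0"
  shows "bound_1pages (insert r M) P1 (P0 - {r}) a R \<le> bound_1pages M P1 P0 a (insert r R)"
proof -
  have sets: "R - insert r M - P1 - (P0 - {r}) = insert r R - M - P1 - P0"
    "P1 - R = P1 - insert r R" "P0 - {r} - R = P0 - insert r R"
    using assms(1-3) by auto
  have "card (P0 - {r}) \<le> card P0"
    using assms(4) by (intro card_mono) auto
  then have "harm (card (P0 - {r})) \<le> (harm (card P0) :: real)"
    by (rule harm_mono)
  then have "pool_cost (P0 - {r}) R \<le> pool_cost P0 (insert r R)"
    unfolding pool_cost_def sets(3) by (intro mult_left_mono) simp_all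
  then show ?thesis
    unfolding bound_1pages_def sets(1,2) by simp
qed

lemma bound_1pages_new:
  assumes "r \<notin> M \<union> P1 \<union> P0" "finite R" "0 < a" "a \<le> card P1"
  shows "bound_1pages M P1 P0 a (insert r R) = 1 + bound_1pages (insert r M) P1 P0 (a - 1) R"
proof -
  have "insert r R - M - P1 - P0 = insert r (R - insert r M - P1 - P0)"
    "P1 - insert r R = P1 - R" "P0 - insert r R = P0 - R"
    using assms(1) by blast+
  then show ?thesis
    using assms(2-4) by (simp add: bound_1pages_def pool_cost_def algebra_simps)
qed

lemma bound_1pages_pool:
  assumes "r \<in> P1" "r \<notin> M" "r \<notin> P0" "finite P1" "0 < a" "a \<le> card P1"
  shows "real (card P1 - a) / real (card P1) + bound_1pages (insert r M) (P1 - {r}) P0 (a - 1) R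
       \<le> bound_1pages M P1 P0 a (insert r R)"
proof -
  define n p g where "n = card (insert r R - M - P1 - P0)" and "p = card P1"
    and "g = card (P1 - insert r R)"
  have sets: "R - insert r M - (P1 - {r}) - P0 = insert r R - M - P1 - P0"
    "P1 - {r} - R = P1 - insert r R" "P0 - R = P0 - insert r R"
    using assms(1-3) by blast+
  have p: "p = Suc (card (P1 - {r}))"
    unfolding p_def using assms(4,1) by (rule card.remove)
  have "bound_1pages (insert r M) (P1 - {r}) P0 (a - 1) R
      = real n + real (n + (p - a)) * (harm (p - 1) - harm g) + pool_cost P0 (insert r R)"
    using p assms(5) unfolding bound_1pages_def pool_cost_def sets n_def g_def by simp
  moreover have "bound_1pages M P1 P0 a (insert r R)
      = real n + real (n + (p - a)) * (harm p - harm g) + pool_cost P0 (insert r R)"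
    unfolding bound_1pages_def n_def p_def g_def ..
  moreover have "real (n + (p - a)) * (harm p - harm g)
      = real (n + (p - a)) * (harm (p - 1) - harm g) + real (n + (p - a)) / real p"
    using p by (simp add: harm_Suc_real algebra_simps add_divide_distrib)
  moreover have "real (p - a) / real p \<le> real (n + (p - a)) / real p"
    by (simp add: divide_right_mono)
  ultimately show ?thesis
    unfolding p_def by linarith
qed

lemma bound_1pages_phase_start_le:
  fixes C R :: "'a set" and p :: "'a \<Rightarrow> bool"
  assumes "finite C" "card C = k" "finite R" "card R \<le> k"
  defines "c \<equiv> card (R - C)" and "\<eta>0 \<equiv> card {q \<in> C. \<not> p q \<and> q \<notin> R}"
    and "\<eta>1 \<equiv> card {q \<in> C. p q \<and> q \<in> R}"
  shows "bound_1pages {} {q \<in> C. p q} {q \<in> C. \<not> p q} (card {q \<in> C. p q}) R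
       \<le> real c * (harm (\<eta>1 + c) - harm c + 1) + harm k * real \<eta>0"
proof -
  define P1 P0 where "P1 = {q \<in> C. p q}" and "P0 = {q \<in> C. \<not> p q}"
  have C: "C = P1 \<union> P0" "P1 \<inter> P0 = {}" "finite P1" "finite P0"
    using assms(1) by (auto simp: P1_def P0_def)
  have "R - {} - P1 - P0 = R - C" "P1 \<inter> R = {q \<in> C. p q \<and> q \<in> R}" "P0 - R = {q \<in> C. \<not> p q \<and> q \<notin> R}"
    by (auto simp: P1_def P0_def)
  moreover have "card P1 = card (P1 \<inter> R) + card (P1 - R)"
    using C(3) by (rule card_Int_Diff)
  ultimately have counts: "c = card (R - {} - P1 - P0)" "card P1 = \<eta>1 + card (P1 - R)" "\<eta>0 = card (P0 - R)"
    by (simp_all add: c_def \<eta>1_def \<eta>0_def)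
  have "bound_1pages {} P1 P0 (card P1) R = real c + real c * (harm (\<eta>1 + card (P1 - R)) - harm (card (P1 - R)))
      + real \<eta>0 * (harm (card P0) - harm \<eta>0)"
    unfolding bound_1pages_def pool_cost_def counts by simp
  also have "\<dots> \<le> real c * (harm (\<eta>1 + c) - harm c + 1) + harm k * real \<eta>0"
  proof (rule harm_phase_bound_le)
    have "c \<le> card (C - R)"
      unfolding c_def using assms(1-4) by (intro card_diff_le_card_diff) simp_all
    also have "C - R = (P1 - R) \<union> (P0 - R)"
      using C(1) by blast
    also have "card \<dots> = card (P1 - R) + \<eta>0"
      using C(2-4) counts(3) by (simp add: card_Un_disjoint disjoint_iff)
    finally show "c \<le> card (P1 - R) + \<eta>0" .
    show "card P0 \<le> k"
      using card_mono[OF assms(1), of P0] assms(2) by (simp add: P0_def)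
    show "\<eta>0 \<le> card P0"
      unfolding counts(3) using C(4) by (rule card_mono) blast
  qed
  finally show ?thesis
    unfolding P1_def P0_def .
qed

lemma random_cache_faults_0pages_le:
  assumes "random_cache_wf k M {} P a" "\<forall>q\<in>P. \<not> pred q" "card (M \<union> fst ` set rs) \<le> k"
  shows "random_cache_faults k M {} P a pred rs \<le> bound_0pages M P (fst ` set rs)"
  using assms
proof (induction rs arbitrary: M P pred a)
  case (Cons rq rs)
  obtain r b where rq: "rq = (r, b)"
    by (cases rq)
  let ?R = "fst ` set rs"
  have requests: "card (M \<union> insert r ?R) \<le> k"
    using Cons.prems(3) by (simp add: rq)
  have disj: "M \<inter> P = {}"
    using Cons.prems(1) by (simp add: random_cache_wf_def)
  have evict: "eviction_candidates ({} \<union> X) pred = X" if "X \<in> subsets_of_size P a" for X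
    using that Cons.prems(2) by (auto simp: eviction_candidates_def subsets_of_size_def)
  have free_slot: "0 < a" if "r \<notin> M"
    using Cons.prems(1) that requests by (rule random_cache_wf_free_slot) simp
  consider "r \<in> M" | "r \<in> P" | "r \<notin> M \<union> {} \<union> P"
    by blast
  then show ?case
  proof cases
    case 1
    then have "random_cache_faults k M {} P a pred (rq # rs)
        = random_cache_faults k M {} P a (pred(r := b)) rs"
      using random_cache_faults_hit[of r M "{}"] by (simp add: rq insert_absorb)
    also have "\<dots> \<le> bound_0pages M P ?R"
      using 1 disj Cons.prems requests by (intro Cons.IH) (auto simp: insert_absorb)
    finally show ?thesis
      using 1 disj by (simp add: rq bound_0pages_hit)
  next
    case 2
    then have "0 < a"
      using disj free_slot by blast
    have "random_cache_faults k M {} P a pred (rq # rs)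
        = real (card P - a) / real (card P)
          + random_cache_faults k (insert r M) {} (P - {r}) (a - 1) (pred(r := b)) rs"
      unfolding rq using Cons.prems(1) 2 \<open>0 < a\<close> evict by (rule random_cache_faults_pool)
    also have "\<dots> \<le> real (card P - a) / real (card P) + bound_0pages (insert r M) (P - {r}) ?R"
      using Cons.prems 2 \<open>0 < a\<close> requests
      by (intro add_left_mono Cons.IH random_cache_wf_pool) auto
    also have "\<dots> \<le> bound_0pages M P (fst ` set (rq # rs))"
      using Cons.prems(1) requests 2 by (simp add: rq bound_0pages_pool)
    finally show ?thesis .
  next
    case 3
    then have "0 < a"
      using free_slot by blast
    have "random_cache_faults k M {} P a pred (rq # rs)
        = 1 + random_cache_faults k (insert r M) {} P (a - 1) (pred(r := b)) rs"
      unfolding rq using Cons.prems(1) 3 \<open>0 < a\<close> evict by (rule random_cache_faults_new)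
    also have "\<dots> \<le> 1 + bound_0pages (insert r M) P ?R"
      using Cons.prems 3 \<open>0 < a\<close> requests
      by (intro add_left_mono Cons.IH random_cache_wf_new) auto
    also have "\<dots> = bound_0pages M P (fst ` set (rq # rs))"
      using 3 by (simp add: rq bound_0pages_new)
    finally show ?thesis .
  qed
qed simp

lemma random_cache_faults_1pages_exhausted_le:
  assumes "random_cache_wf k M P0 P1 0" "\<forall>q\<in>P0. \<not> pred q" "card (M \<union> fst ` set rs) \<le> k"
  shows "random_cache_faults k M P0 P1 0 pred rs \<le> bound_1pages M P1 P0 0 (fst ` set rs)"
proof -
  have wf: "finite P0" "finite P1" "M \<inter> P1 = {}" "P1 \<inter> P0 = {}"
    using assms(1) by (auto simp: random_cache_wf_def)
  then have "random_cache_faults k M P0 P1 0 pred rs = random_cache_faults k M {} P0 (card P0) pred rs"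
    by (simp add: random_cache_faults_exhausted)
  also have "\<dots> \<le> bound_0pages M P0 (fst ` set rs)"
    using assms by (intro random_cache_faults_0pages_le random_cache_wf_exhausted)
  also have "\<dots> \<le> bound_1pages M P1 P0 0 (fst ` set rs)"
    using wf by (intro bound_1pages_exhausted) auto
  finally show ?thesis .
qed

lemma random_cache_faults_1pages_le:
  assumes "random_cache_wf k M P0 P1 a" "\<forall>q\<in>P1. pred q" "\<forall>q\<in>P0. \<not> pred q"
    and "card (M \<union> fst ` set rs) \<le> k"
  shows "random_cache_faults k M P0 P1 a pred rs \<le> bound_1pages M P1 P0 a (fst ` set rs)"
  using assms
proof (induction rs arbitrary: M P0 P1 pred a)
  case (Cons rq rs)
  have wf: "finite P0" "finite P1" "M \<inter> P1 = {}" "M \<inter> P0 = {}" "P1 \<inter> P0 = {}" "a \<le> card P1"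
    using Cons.prems(1) by (auto simp: random_cache_wf_def)
  show ?case
  proof (cases "a = 0")
    case True
    show ?thesis
      using Cons.prems(1,3,4) unfolding True by (rule random_cache_faults_1pages_exhausted_le)
  next
    case False
    obtain r b where rq: "rq = (r, b)"
      by (cases rq)
    let ?R = "fst ` set rs"
    have R': "fst ` set (rq # rs) = insert r ?R"
      by (simp add: rq)
    have requests: "card (M \<union> insert r ?R) \<le> k"
      using Cons.prems(4) by (simp add: rq)
    have evict: "eviction_candidates (P0 \<union> X) pred = X" if "X \<in> subsets_of_size P1 a" for X
      using that False Cons.prems(2,3) by (intro eviction_candidates_1pages) (auto simp: subsets_of_size_def)
    consider "r \<in> M \<union> P0" | "r \<in> P1" | "r \<notin> M \<union> P0 \<union> P1"
      by blast
    then show ?thesis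
    proof cases
      case 1
      then have "random_cache_faults k M P0 P1 a pred (rq # rs)
          = random_cache_faults k (insert r M) (P0 - {r}) P1 a (pred(r := b)) rs"
        unfolding rq by (rule random_cache_faults_hit)
      also have "\<dots> \<le> bound_1pages (insert r M) P1 (P0 - {r}) a ?R"
        using 1 wf Cons.prems requests by (intro Cons.IH random_cache_wf_hit) auto
      also have "\<dots> \<le> bound_1pages M P1 P0 a (fst ` set (rq # rs))"
        using 1 wf by (simp add: rq bound_1pages_hit)
      finally show ?thesis .
    next
      case 2
      have "random_cache_faults k M P0 P1 a pred (rq # rs)
          = real (card P1 - a) / real (card P1)
            + random_cache_faults k (insert r M) P0 (P1 - {r}) (a - 1) (pred(r := b)) rs"
        unfolding rq using Cons.prems(1) 2 False evict by (intro random_cache_faults_pool) auto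
      also have "\<dots> \<le> real (card P1 - a) / real (card P1) + bound_1pages (insert r M) (P1 - {r}) P0 (a - 1) ?R"
        using 2 False wf Cons.prems requests by (intro add_left_mono Cons.IH random_cache_wf_pool) auto
      also have "\<dots> \<le> bound_1pages M P1 P0 a (fst ` set (rq # rs))"
        unfolding R' using 2 False wf by (intro bound_1pages_pool) auto
      finally show ?thesis .
    next
      case 3
      have "random_cache_faults k M P0 P1 a pred (rq # rs)
          = 1 + random_cache_faults k (insert r M) P0 P1 (a - 1) (pred(r := b)) rs"
        unfolding rq using Cons.prems(1) 3 False evict by (intro random_cache_faults_new) auto
      also have "\<dots> \<le> 1 + bound_1pages (insert r M) P1 P0 (a - 1) ?R"
        using 3 False Cons.prems requests by (intro add_left_mono Cons.IH random_cache_wf_new) auto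
      also have "\<dots> = bound_1pages M P1 P0 a (fst ` set (rq # rs))"
        using 3 False wf by (simp add: rq bound_1pages_new)
      finally show ?thesis .
    qed
  qed
qed simp

theorem lemma1:
  fixes k :: nat and C :: "'a set" and p0 :: "'a \<Rightarrow> bool" and rs :: "('a \<times> bool) list"
  assumes "k \<ge> 1"
    and "finite C" and "card C = k"
    and "rs \<noteq> []" and "fst (hd rs) \<notin> C"
    and "card (fst ` set rs) \<le> k"
  defines "c \<equiv> card (fst ` set rs - C)"
    and "\<eta>0 \<equiv> card {q \<in> C. \<not> p0 q \<and> q \<notin> fst ` set rs}"
    and "\<eta>1 \<equiv> card {q \<in> C. p0 q \<and> q \<in> fst ` set rs}"
  shows "measure_pmf.expectation (mp_faults k (C, C, p0) rs) real
           \<le> real c * (harm (\<eta>1 + c) - harm c + 1) + harm k * real \<eta>0"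
proof -
  define P1 P0 where "P1 = {q \<in> C. p0 q}" and "P0 = {q \<in> C. \<not> p0 q}"
  have C: "C = {} \<union> P0 \<union> P1" "P0 \<inter> P1 = {}" "finite P1"
    using assms(2) by (auto simp: P1_def P0_def)
  then have wf: "random_cache_wf k {} P0 P1 (card P1)"
    using assms(2,3) by (simp add: random_cache_wf_def card_Un_disjoint)
  have "measure_pmf.expectation (mp_faults k (C, C, p0) rs) real = expected_faults k (C, {}, p0) rs"
    unfolding expected_faults_def[symmetric] using assms(1,3)
    by (intro expected_faults_phase_start[OF assms(5,3)]) auto
  also have "\<dots> = random_cache_faults k {} P0 P1 (card P1) p0 rs"
    unfolding random_cache_faults_def subsets_of_size_card[OF C(3)] C(1) by simp
  also have "\<dots> \<le> bound_1pages {} P1 P0 (card P1) (fst ` set rs)"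
    using assms(6) by (intro random_cache_faults_1pages_le[OF wf]) (simp_all add: P1_def P0_def)
  also have "\<dots> \<le> real c * (harm (\<eta>1 + c) - harm c + 1) + harm k * real \<eta>0"
    unfolding P1_def P0_def c_def \<eta>0_def \<eta>1_def using assms(2,3,6)
    by (intro bound_1pages_phase_start_le) simp_all
  finally show ?thesis .
qed

end
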